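(* Let $k_0<q$ be positive integers and $\mathbb{F}$ a finite field. Let $\mathcal{S}\subseteq\binom{[q]}{k_0-1}$ be a family of $(k_0-1)$-element subsets of $[q]$ such that any two distinct $S_1,S_2\in\mathcal{S}$ satisfy $|S_1\cap S_2|\le1$. Then there is a black-box transformation with parameters $(k_0-1,\,q+|\mathcal{S}|,\,k_0,\,|\mathcal{S}|,\,\mathbb{F})$ and rate $1-q/(q+|\mathcal{S}|)$, in which $c_j\le|\mathcal{S}|$ for every $j\in[q+|\mathcal{S}|]$.
   Context: A $k$-party $\ell$-LMSSS over $\mathbb{F}$: an $\mathbb{F}$-linear map $\mathsf{Share}:\mathbb{F}^\ell\times\mathbb{F}^e\to\mathbb{F}^{b_1}\times\dots\times\mathbb{F}^{b_k}$ together with an access structure (sets that can linearly recover the secret) and adversary structure (sets whose shares, under uniform randomness, are distributed independently of the secret); information rate $\ell/\sum_jb_j$. Black-box transformation with parameters $(t,k,k_0,\ell,\mathbb{F})$: a $k$-party $\ell$-LMSSS $\mathcal{L}=(\mathsf{Share}_\mathcal{L},\mathsf{Rec}_\mathcal{L})$ over $\mathbb{F}$ with parameters $(e,b_1,\dots,b_k)$ (all $k$ parties together qualified), replication functions $\psi_i:[k_0]\to2^{[k]}$ ($i\in[\ell]$) and conversion functions $\varphi_j:\mathbb{F}^{c_j}\to\mathbb{F}^{b_j}$, $c_j=\sum_{i=1}^\ell|\{v\in[k_0]:j\in\psi_i(v)\}|$, such that for every $(y_i^{(v)})_{i\in[\ell],v\in[k_0]}$ there is $\mathbf{r}$ with $(\varphi_j(\mathbf{Y}(j)))_{j}=\mathsf{Share}_\mathcal{L}((\sum_vy_1^{(v)},\dots,\sum_vy_\ell^{(v)}),\mathbf{r})$,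 where $\mathbf{Y}(j)=(y_i^{(v)})_{i,v:\,j\in\psi_i(v)}$; and for every $T\subseteq[k]$ with $|T|\le t$ and every $i$, $|\bigcup_{j\in T}\{v:j\in\psi_i(v)\}|\le k_0-1$. Its rate is the information rate of $\mathcal{L}$. *)

theory Defs
  imports Complex_Main
begin

text \<open>A vector in F^n is a function nat => 'a vanishing at indices >= n.
  Parties are indexed 0..k-1; [q] is rendered as {0..<q}.
  A share map takes a secret s (in F^l) and randomness r (in F^e) and returns
  Share s r j m = the m-th coordinate (m < b j) of party j's share (j < k).\<close>

definition vec :: "nat \<Rightarrow> (nat \<Rightarrow> 'a::zero) set" where
  "vec n = {v. \<forall>i\<ge>n. v i = 0}"

definition lmsss ::
  "nat \<Rightarrow> nat \<Rightarrow> nat \<Rightarrow> (nat \<Rightarrow> nat) \<Rightarrow>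
   ((nat \<Rightarrow> 'a::field) \<Rightarrow> (nat \<Rightarrow> 'a) \<Rightarrow> nat \<Rightarrow> nat \<Rightarrow> 'a) \<Rightarrow> bool" where
  "lmsss k l e b Share \<longleftrightarrow>
     (\<forall>s\<in>vec l. \<forall>s'\<in>vec l. \<forall>r\<in>vec e. \<forall>r'\<in>vec e. \<forall>j<k. \<forall>m<b j.
        Share (\<lambda>i. s i + s' i) (\<lambda>i. r i + r' i) j m = Share s r j m + Share s' r' j m) \<and>
     (\<forall>c. \<forall>s\<in>vec l. \<forall>r\<in>vec e. \<forall>j<k. \<forall>m<b j.
        Share (\<lambda>i. c * s i) (\<lambda>i. c * r i) j m = c * Share s r j m)"

definition lmsss_qualified ::
  "nat \<Rightarrow> nat \<Rightarrow> (nat \<Rightarrow> nat) \<Rightarrow>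
   ((nat \<Rightarrow> 'a::field) \<Rightarrow> (nat \<Rightarrow> 'a) \<Rightarrow> nat \<Rightarrow> nat \<Rightarrow> 'a) \<Rightarrow> nat set \<Rightarrow> bool" where
  "lmsss_qualified l e b Share A \<longleftrightarrow>
     (\<exists>coef :: nat \<Rightarrow> nat \<Rightarrow> nat \<Rightarrow> 'a. \<forall>s\<in>vec l. \<forall>r\<in>vec e. \<forall>i<l.
        s i = (\<Sum>j\<in>A. \<Sum>m<b j. coef i j m * Share s r j m))"

text \<open>Adversary structure: the view of T under uniform randomness is independent
  of the secret (equal counts of randomness producing each view). Not needed
  by the theorem, recorded for completeness.\<close>
definition lmsss_unqualified ::
  "nat \<Rightarrow> nat \<Rightarrow> (nat \<Rightarrow> nat) \<Rightarrow>
   ((nat \<Rightarrow> 'a::{finite,field}) \<Rightarrow> (nat \<Rightarrow> 'a) \<Rightarrow> nat \<Rightarrow> nat \<Rightarrow> 'a) \<Rightarrow> nat set \<Rightarrow> bool" where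
  "lmsss_unqualified l e b Share T \<longleftrightarrow>
     (\<forall>s\<in>vec l. \<forall>s'\<in>vec l. \<forall>w :: nat \<Rightarrow> nat \<Rightarrow> 'a.
        card {r\<in>vec e. \<forall>j\<in>T. \<forall>m<b j. Share s r j m = w j m}
      = card {r\<in>vec e. \<forall>j\<in>T. \<forall>m<b j. Share s' r j m = w j m})"

definition info_rate :: "nat \<Rightarrow> nat \<Rightarrow> (nat \<Rightarrow> nat) \<Rightarrow> real" where
  "info_rate k l b = real l / real (\<Sum>j<k. b j)"

definition repl_idx :: "nat \<Rightarrow> nat \<Rightarrow> (nat \<Rightarrow> nat \<Rightarrow> nat set) \<Rightarrow> nat \<Rightarrow> (nat \<times> nat) set" where
  "repl_idx l k0 \<psi> j = {(i, v). i < l \<and> v < k0 \<and> j \<in> \<psi> i v}"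

definition c_count :: "nat \<Rightarrow> nat \<Rightarrow> (nat \<Rightarrow> nat \<Rightarrow> nat set) \<Rightarrow> nat \<Rightarrow> nat" where
  "c_count l k0 \<psi> j = card (repl_idx l k0 \<psi> j)"

definition Yview :: "nat \<Rightarrow> nat \<Rightarrow> (nat \<Rightarrow> nat \<Rightarrow> nat set) \<Rightarrow> nat \<Rightarrow> (nat \<times> nat \<Rightarrow> 'a::zero) \<Rightarrow> nat \<times> nat \<Rightarrow> 'a" where
  "Yview l k0 \<psi> j y = (\<lambda>p. if p \<in> repl_idx l k0 \<psi> j then y p else 0)"

definition black_box_transformation ::
  "nat \<Rightarrow> nat \<Rightarrow> nat \<Rightarrow> nat \<Rightarrow> nat \<Rightarrow> (nat \<Rightarrow> nat) \<Rightarrow>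
   ((nat \<Rightarrow> 'a::{finite,field}) \<Rightarrow> (nat \<Rightarrow> 'a) \<Rightarrow> nat \<Rightarrow> nat \<Rightarrow> 'a) \<Rightarrow>
   (nat \<Rightarrow> nat \<Rightarrow> nat set) \<Rightarrow> (nat \<Rightarrow> (nat \<times> nat \<Rightarrow> 'a) \<Rightarrow> nat \<Rightarrow> 'a) \<Rightarrow> bool" where
  "black_box_transformation t k k0 l e b Share \<psi> \<phi> \<longleftrightarrow>
     lmsss k l e b Share \<and>
     lmsss_qualified l e b Share {..<k} \<and>
     (\<forall>i<l. \<forall>v<k0. \<psi> i v \<subseteq> {..<k}) \<and>
     (\<forall>y :: nat \<times> nat \<Rightarrow> 'a. \<exists>r\<in>vec e. \<forall>j<k. \<forall>m<b j.
        \<phi> j (Yview l k0 \<psi> j y) m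
          = Share (\<lambda>i. if i < l then (\<Sum>v<k0. y (i, v)) else 0) r j m) \<and>
     (\<forall>T\<subseteq>{..<k}. card T \<le> t \<longrightarrow>
        (\<forall>i<l. card (\<Union>j\<in>T. {v. v < k0 \<and> j \<in> \<psi> i v}) \<le> k0 - 1))"

end

theory Submission
  imports Defs
begin

text \<open>Index the members of \<open>S\<close> as blocks \<open>P i\<close> of the point set \<open>[q]\<close> and label the
  \<open>k\<^sub>0 - 1\<close> points of each block by \<open>0, \<dots>, k\<^sub>0 - 2\<close>. The underlying scheme has \<open>q\<close> point parties
  holding uniform randomness \<open>r a\<close>, and one block party per secret holding \<open>s i\<close> minus the sum
  of \<open>r a\<close> over \<open>a \<in> P i\<close>. Piece \<open>v < k\<^sub>0 - 1\<close> of secret \<open>i\<close> goes to the point of \<open>P i\<close>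
  labelled \<open>v\<close> and to every other block party whose block contains that point; the last piece goes
  to block party \<open>i\<close> alone. A point party outputs the sum of the pieces it holds, which serves as
  its randomness; block party \<open>i\<close> knows the contributions of the other secrets at the points of
  \<open>P i\<close> and subtracts them from its last piece. Since two blocks meet in at most one point,
  every party holds at most one piece of each secret, so \<open>k\<^sub>0 - 1\<close> parties never see all
  \<open>k\<^sub>0\<close> pieces.\<close>

definition at_most_one_piece :: "nat \<Rightarrow> (nat \<Rightarrow> nat \<Rightarrow> nat set) \<Rightarrow> bool" where
  "at_most_one_piece l \<psi> \<longleftrightarrow> (\<forall>i<l. \<forall>j v v'. j \<in> \<psi> i v \<longrightarrow> j \<in> \<psi> i v' \<longrightarrow> v = v')"

lemma card_UN_subsingletons_le:
  assumes "finite T" and "\<And>j x y. j \<in> T \<Longrightarrow> x \<in> A j \<Longrightarrow> y \<in> A j \<Longrightarrow> x = y"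
  shows "card (\<Union>j\<in>T. A j) \<le> card T"
proof -
  have "(\<Union>j\<in>T. A j) \<subseteq> (\<lambda>j. THE x. x \<in> A j) ` T"
  proof
    fix x assume "x \<in> (\<Union>j\<in>T. A j)"
    then obtain j where "j \<in> T" "x \<in> A j" by blast
    then have "x = (THE x. x \<in> A j)"
      using assms(2) by (metis the_equality)
    then show "x \<in> (\<lambda>j. THE x. x \<in> A j) ` T"
      using \<open>j \<in> T\<close> by blast
  qed
  then show ?thesis
    using assms(1) by (meson card_image_le card_mono finite_imageI le_trans)
qed

lemma at_most_one_piece_card_UN_le:
  assumes "at_most_one_piece l \<psi>" and "finite T" and "i < l"
  shows "card (\<Union>j\<in>T. {v. v < k0 \<and> j \<in> \<psi> i v}) \<le> card T"
  using assms by (intro card_UN_subsingletons_le) (auto simp: at_most_one_piece_def)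

lemma at_most_one_piece_c_count_le:
  assumes "at_most_one_piece l \<psi>"
  shows "c_count l k0 \<psi> j \<le> l"
proof -
  have "inj_on fst (repl_idx l k0 \<psi> j)"
    using assms by (auto simp: inj_on_def repl_idx_def at_most_one_piece_def)
  moreover have "fst ` repl_idx l k0 \<psi> j \<subseteq> {..<l}"
    by (auto simp: repl_idx_def)
  ultimately show ?thesis
    unfolding c_count_def by (metis card_inj_on_le card_lessThan finite_lessThan)
qed

lemma Yview_apply: "p \<in> repl_idx l k0 \<psi> j \<Longrightarrow> Yview l k0 \<psi> j y p = y p"
  by (simp add: Yview_def)

definition block_share ::
  "nat \<Rightarrow> (nat \<Rightarrow> nat set) \<Rightarrow> (nat \<Rightarrow> 'a::field) \<Rightarrow> (nat \<Rightarrow> 'a) \<Rightarrow> nat \<Rightarrow> nat \<Rightarrow> 'a" where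
  "block_share q P s r j m = (if j < q then r j else s (j - q) - (\<Sum>a\<in>P (j - q). r a))"

lemma lmsss_block_share: "lmsss k l e b (block_share q P)"
  unfolding lmsss_def block_share_def
  by (auto simp: sum.distrib algebra_simps sum_distrib_left[symmetric])

lemma lmsss_qualified_block_share:
  assumes "\<And>i. i < l \<Longrightarrow> P i \<subseteq> {..<q}"
  shows "lmsss_qualified l e (\<lambda>_. 1) (block_share q P) {..<q + l}"
proof -
  define coef :: "nat \<Rightarrow> nat \<Rightarrow> nat \<Rightarrow> 'a" where
    "coef i j m = (if j = q + i then 1 else 0) + (if j \<in> P i then 1 else 0)" for i j m
  have "s i = (\<Sum>j<q + l. \<Sum>m<1. coef i j m * block_share q P s r j m)" if "i < l" for s r i
  proof -
    have "(\<Sum>j<q + l. \<Sum>m<1. coef i j m * block_share q P s r j m)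
        = (\<Sum>j<q + l. (if j = q + i then block_share q P s r j 0 else 0)
                       + (if j \<in> P i then block_share q P s r j 0 else 0))"
      by (intro sum.cong) (auto simp: coef_def algebra_simps)
    also have "\<dots> = block_share q P s r (q + i) 0 + (\<Sum>j\<in>{..<q + l} \<inter> P i. block_share q P s r j 0)"
      using that by (simp add: sum.distrib sum.inter_restrict)
    also have "{..<q + l} \<inter> P i = P i"
      using assms[OF that] by auto
    also have "(\<Sum>j\<in>P i. block_share q P s r j 0) = (\<Sum>j\<in>P i. r j)"
      using assms[OF that] by (intro sum.cong) (auto simp: block_share_def)
    finally show ?thesis
      by (simp add: block_share_def)
  qed
  then show ?thesis
    unfolding lmsss_qualified_def by blast
qed

lemma info_rate_unit_shares:
  assumes "0 < q"
  shows "info_rate (q + l) l (\<lambda>_. 1) = 1 - real q / real (q + l)"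
  using assms by (simp add: info_rate_def field_simps)

locale packing_transformation =
  fixes q l k0 :: nat and P :: "nat \<Rightarrow> nat set" and pos :: "nat \<Rightarrow> nat \<Rightarrow> nat"
  assumes k0_pos: "0 < k0"
    and blocks_subset: "i < l \<Longrightarrow> P i \<subseteq> {..<q}"
    and pos_bij: "i < l \<Longrightarrow> bij_betw (pos i) (P i) {..<k0 - 1}"
    and blocks_meet: "i < l \<Longrightarrow> i' < l \<Longrightarrow> i \<noteq> i' \<Longrightarrow> card (P i \<inter> P i') \<le> 1"
begin

lemma finite_block: "i < l \<Longrightarrow> finite (P i)"
  using blocks_subset finite_subset by blast

lemma pos_less: "i < l \<Longrightarrow> a \<in> P i \<Longrightarrow> pos i a < k0 - 1"
  using pos_bij by (auto simp: bij_betw_def)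

lemma blocks_meet_eq:
  assumes "i < l" "i' < l" "i \<noteq> i'" "a \<in> P i \<inter> P i'" "a' \<in> P i \<inter> P i'"
  shows "a = a'"
  using blocks_meet[OF assms(1-3)] finite_block[OF assms(1)] assms(4,5)
  by (auto simp: card_le_Suc0_iff_eq)

text \<open>Parties \<open>0, \<dots>, q - 1\<close> are the points, party \<open>q + i\<close> is the block \<open>P i\<close>.\<close>

definition piece_holders :: "nat \<Rightarrow> nat \<Rightarrow> nat set" where
  "piece_holders i v =
     {j. (j \<in> P i \<and> pos i j = v)
       \<or> (\<exists>i'<l. i' \<noteq> i \<and> j = q + i' \<and> (\<exists>a\<in>P i \<inter> P i'. pos i a = v))
       \<or> (j = q + i \<and> v = k0 - 1)}"

lemma piece_holders_subset: "i < l \<Longrightarrow> piece_holders i v \<subseteq> {..<q + l}"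
  using blocks_subset by (fastforce simp: piece_holders_def)

lemma piece_holders_at_most_one_piece: "at_most_one_piece l piece_holders"
  unfolding at_most_one_piece_def
proof (intro allI impI)
  fix i j v v'
  assume i: "i < l" and holders: "j \<in> piece_holders i v" "j \<in> piece_holders i v'"
  consider "j < q" | i' where "i' < l" "j = q + i'" "i' \<noteq> i" | "j = q + i"
    using holders(1) blocks_subset[OF i] by (auto simp: piece_holders_def)
  then show "v = v'"
  proof cases
    case 1
    then show ?thesis using holders by (auto simp: piece_holders_def)
  next
    case (2 i')
    then obtain a a' where "a \<in> P i \<inter> P i'" "pos i a = v" "a' \<in> P i \<inter> P i'" "pos i a' = v'"
      using holders blocks_subset[OF i] by (auto simp: piece_holders_def)
    then show ?thesis using blocks_meet_eq[OF i \<open>i' < l\<close>] 2 by metis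
  next
    case 3
    then show ?thesis using holders blocks_subset[OF i] by (auto simp: piece_holders_def)
  qed
qed

definition point_sum :: "(nat \<times> nat \<Rightarrow> 'a::comm_monoid_add) \<Rightarrow> nat \<Rightarrow> 'a" where
  "point_sum y a = (\<Sum>i\<in>{i. i < l \<and> a \<in> P i}. y (i, pos i a))"

definition point_sum_off :: "(nat \<times> nat \<Rightarrow> 'a::comm_monoid_add) \<Rightarrow> nat \<Rightarrow> nat \<Rightarrow> 'a" where
  "point_sum_off y i a = (\<Sum>i'\<in>{i'. i' < l \<and> i' \<noteq> i \<and> a \<in> P i'}. y (i', pos i' a))"

definition convert :: "nat \<Rightarrow> (nat \<times> nat \<Rightarrow> 'a::ab_group_add) \<Rightarrow> nat \<Rightarrow> 'a" where
  "convert j Y m =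
     (if j < q then point_sum Y j
      else Y (j - q, k0 - 1) - (\<Sum>a\<in>P (j - q). point_sum_off Y (j - q) a))"

lemma point_sum_split:
  assumes "i < l" "a \<in> P i"
  shows "point_sum y a = y (i, pos i a) + point_sum_off y i a"
proof -
  have "{i'. i' < l \<and> a \<in> P i'} = insert i {i'. i' < l \<and> i' \<noteq> i \<and> a \<in> P i'}"
    using assms by auto
  then show ?thesis
    by (simp add: point_sum_def point_sum_off_def)
qed

lemma sum_point_sum_block:
  assumes "i < l"
  shows "(\<Sum>a\<in>P i. point_sum y a) = (\<Sum>v<k0 - 1. y (i, v)) + (\<Sum>a\<in>P i. point_sum_off y i a)"
proof -
  have "(\<Sum>a\<in>P i. point_sum y a) = (\<Sum>a\<in>P i. y (i, pos i a) + point_sum_off y i a)"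
    using point_sum_split[OF assms] by (rule sum.cong[OF refl])
  also have "\<dots> = (\<Sum>a\<in>P i. y (i, pos i a)) + (\<Sum>a\<in>P i. point_sum_off y i a)"
    by (rule sum.distrib)
  also have "(\<Sum>a\<in>P i. y (i, pos i a)) = (\<Sum>v<k0 - 1. y (i, v))"
    using sum.reindex_bij_betw[OF pos_bij[OF assms]] .
  finally show ?thesis .
qed

lemma point_sum_Yview:
  assumes "a < q"
  shows "point_sum (Yview l k0 piece_holders a y) a = point_sum y a"
  unfolding point_sum_def
proof (intro sum.cong refl Yview_apply)
  fix i assume "i \<in> {i. i < l \<and> a \<in> P i}"
  then show "(i, pos i a) \<in> repl_idx l k0 piece_holders a"
    using pos_less by (fastforce simp: repl_idx_def piece_holders_def)
qed

lemma point_sum_off_Yview: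
  assumes "i < l" "a \<in> P i"
  shows "point_sum_off (Yview l k0 piece_holders (q + i) y) i a = point_sum_off y i a"
  unfolding point_sum_off_def
proof (intro sum.cong refl Yview_apply)
  fix i' assume "i' \<in> {i'. i' < l \<and> i' \<noteq> i \<and> a \<in> P i'}"
  then show "(i', pos i' a) \<in> repl_idx l k0 piece_holders (q + i)"
    using assms pos_less by (fastforce simp: repl_idx_def piece_holders_def)
qed

lemma last_piece_Yview:
  assumes "i < l"
  shows "Yview l k0 piece_holders (q + i) y (i, k0 - 1) = y (i, k0 - 1)"
  using assms k0_pos by (intro Yview_apply) (auto simp: repl_idx_def piece_holders_def)

lemma convert_Yview:
  assumes "j < q + l"
  shows "convert j (Yview l k0 piece_holders j y) m
       = block_share q P (\<lambda>i. if i < l then \<Sum>v<k0. y (i, v) else 0)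
           (\<lambda>a. if a < q then point_sum y a else 0) j m"
proof (cases "j < q")
  case True
  then show ?thesis
    by (simp add: convert_def block_share_def point_sum_Yview)
next
  case False
  define i where "i = j - q"
  have i: "i < l" and j: "j = q + i"
    using False assms by (simp_all add: i_def)
  have "(\<Sum>a\<in>P i. point_sum_off (Yview l k0 piece_holders j y) i a) = (\<Sum>a\<in>P i. point_sum_off y i a)"
    unfolding j by (rule sum.cong[OF refl]) (rule point_sum_off_Yview[OF i])
  then have "convert j (Yview l k0 piece_holders j y) m
      = y (i, k0 - 1) - (\<Sum>a\<in>P i. point_sum_off y i a)"
    using i j last_piece_Yview[OF i, of y] by (simp add: convert_def)
  also have "\<dots> = (\<Sum>v<Suc (k0 - 1). y (i, v)) - (\<Sum>a\<in>P i. point_sum y a)"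
    by (simp add: sum_point_sum_block[OF i])
  also have "\<dots> = (\<Sum>v<k0. y (i, v)) - (\<Sum>a\<in>P i. if a < q then point_sum y a else 0)"
    using k0_pos blocks_subset[OF i] by (auto intro!: sum.cong)
  finally show ?thesis
    using i j by (simp add: block_share_def)
qed

theorem black_box:
  "black_box_transformation (k0 - 1) (q + l) k0 l q (\<lambda>_. 1) (block_share q P) piece_holders convert"
  unfolding black_box_transformation_def
proof (intro conjI allI impI)
  show "lmsss (q + l) l q (\<lambda>_. 1) (block_share q P)"
    by (rule lmsss_block_share)
  show "lmsss_qualified l q (\<lambda>_. 1) (block_share q P) {..<q + l}"
    using blocks_subset by (rule lmsss_qualified_block_share)
  show "piece_holders i v \<subseteq> {..<q + l}" if "i < l" for i v
    using that by (rule piece_holders_subset)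
  fix y :: "nat \<times> nat \<Rightarrow> 'a"
  have "(\<lambda>a. if a < q then point_sum y a else 0) \<in> vec q"
    by (simp add: vec_def)
  then show "\<exists>r\<in>vec q. \<forall>j<q + l. \<forall>m<1. convert j (Yview l k0 piece_holders j y) m
      = block_share q P (\<lambda>i. if i < l then \<Sum>v<k0. y (i, v) else 0) r j m"
    by (rule bexI[rotated]) (intro allI impI convert_Yview)
next
  fix T i assume T: "T \<subseteq> {..<q + l}" "card T \<le> k0 - 1" and i: "i < l"
  have "finite T"
    using T(1) finite_subset by blast
  then have "card (\<Union>j\<in>T. {v. v < k0 \<and> j \<in> piece_holders i v}) \<le> card T"
    using piece_holders_at_most_one_piece i by (intro at_most_one_piece_card_UN_le)
  then show "card (\<Union>j\<in>T. {v. v < k0 \<and> j \<in> piece_holders i v}) \<le> k0 - 1"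
    using T(2) by linarith
qed

lemma c_count_le: "c_count l k0 piece_holders j \<le> l"
  using piece_holders_at_most_one_piece by (rule at_most_one_piece_c_count_le)

end

lemma ex_packing_transformation:
  assumes "0 < k0"
    and "S \<subseteq> {A. A \<subseteq> {..<q} \<and> card A = k0 - 1}"
    and "\<forall>S1\<in>S. \<forall>S2\<in>S. S1 \<noteq> S2 \<longrightarrow> card (S1 \<inter> S2) \<le> 1"
  shows "\<exists>P pos. packing_transformation q (card S) k0 P pos"
proof -
  have "finite S"
    using assms(2) by (intro finite_subset[of S "Pow {..<q}"]) auto
  then obtain P where P: "bij_betw P {..<card S} S"
    using ex_bij_betw_nat_finite atLeast0LessThan by metis
  then have blocks: "P i \<subseteq> {..<q}" "card (P i) = k0 - 1" if "i < card S" for i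
    using that assms(2) by (auto simp: bij_betw_def)
  have "\<forall>i. \<exists>h. i < card S \<longrightarrow> bij_betw h (P i) {..<k0 - 1}"
    using blocks by (metis atLeast0LessThan ex_bij_betw_finite_nat finite_lessThan finite_subset)
  then obtain pos where pos: "bij_betw (pos i) (P i) {..<k0 - 1}" if "i < card S" for i
    by metis
  have meet: "card (P i \<inter> P i') \<le> 1" if "i < card S" "i' < card S" "i \<noteq> i'" for i i'
  proof -
    have "P i \<in> S" "P i' \<in> S" "P i \<noteq> P i'"
      using P that by (auto simp: bij_betw_def inj_on_def)
    then show ?thesis
      using assms(3) by blast
  qed
  have "packing_transformation q (card S) k0 P pos"
    using assms(1) blocks(1) pos meet by unfold_locales
  then show ?thesis
    by blast
qed

theorem mainTheorem14:
  fixes k0 q :: nat and S :: "nat set set"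
  assumes "0 < k0" and "k0 < q"
    and "S \<subseteq> {A. A \<subseteq> {..<q} \<and> card A = k0 - 1}"
    and "\<forall>S1\<in>S. \<forall>S2\<in>S. S1 \<noteq> S2 \<longrightarrow> card (S1 \<inter> S2) \<le> 1"
  shows "\<exists>e b (Share :: (nat \<Rightarrow> 'a::{finite,field}) \<Rightarrow> (nat \<Rightarrow> 'a) \<Rightarrow> nat \<Rightarrow> nat \<Rightarrow> 'a) \<psi> \<phi>.
           black_box_transformation (k0 - 1) (q + card S) k0 (card S) e b Share \<psi> \<phi> \<and>
           info_rate (q + card S) (card S) b = 1 - real q / real (q + card S) \<and>
           (\<forall>j<q + card S. c_count (card S) k0 \<psi> j \<le> card S)"
proof -
  obtain P pos where "packing_transformation q (card S) k0 P pos"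
    using ex_packing_transformation[OF assms(1,3,4)] by blast
  then interpret packing_transformation q "card S" k0 P pos .
  have "info_rate (q + card S) (card S) (\<lambda>_. 1) = 1 - real q / real (q + card S)"
    using assms(2) by (intro info_rate_unit_shares) simp
  moreover have "\<forall>j<q + card S. c_count (card S) k0 piece_holders j \<le> card S"
    using c_count_le by blast
  ultimately show ?thesis
    using black_box by blast
qed

end
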